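(* Let $n\ge1$, $\epsilon\in[0,1/2]$, $m\in\{j/2^n:0\le j\le 2^n\}$, and let $\Phi:[0,1]\to\mathbb{R}$ be convex. Then there exists a monotone Boolean function $f:\{0,1\}^n\to\{0,1\}$ with $\mathbb{E} f=m$ such that $\mathbb{E}\Phi(T_\epsilon f)\ge\mathbb{E}\Phi(T_\epsilon g)$ for every Boolean function $g:\{0,1\}^n\to\{0,1\}$ with $\mathbb{E} g=m$.
   Context: $\{0,1\}^n$ carries the uniform measure and $\mathbb{E}$ is expectation under it. The noise operator is $T_\epsilon f(x)=\mathbb{E} f(x+Z)$, where $Z$ has independent Bernoulli($\epsilon$) coordinates and addition is mod 2. A function $f$ is monotone if $f(x)\le f(y)$ whenever $x_i\le y_i$ for all $i\in[n]$. *)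

theory Defs
  imports "HOL-Analysis.Analysis"
begin

definition cube :: "nat \<Rightarrow> (nat \<Rightarrow> bool) set" where
  "cube n = {x. \<forall>i\<ge>n. \<not> x i}"

definition cexp :: "nat \<Rightarrow> ((nat \<Rightarrow> bool) \<Rightarrow> real) \<Rightarrow> real" where
  "cexp n f = (\<Sum>x\<in>cube n. f x) / 2 ^ n"

definition xadd :: "(nat \<Rightarrow> bool) \<Rightarrow> (nat \<Rightarrow> bool) \<Rightarrow> (nat \<Rightarrow> bool)" where
  "xadd x z = (\<lambda>i. x i \<noteq> z i)"

definition bern :: "nat \<Rightarrow> real \<Rightarrow> (nat \<Rightarrow> bool) \<Rightarrow> real" where
  "bern n eps z = (\<Prod>i<n. if z i then eps else 1 - eps)"

definition noise :: "nat \<Rightarrow> real \<Rightarrow> ((nat \<Rightarrow> bool) \<Rightarrow> real) \<Rightarrow> (nat \<Rightarrow> bool) \<Rightarrow> real" where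
  "noise n eps f x = (\<Sum>z\<in>cube n. bern n eps z * f (xadd x z))"

definition boolean_fun :: "nat \<Rightarrow> ((nat \<Rightarrow> bool) \<Rightarrow> real) \<Rightarrow> bool" where
  "boolean_fun n f \<longleftrightarrow> (\<forall>x\<in>cube n. f x = 0 \<or> f x = 1)"

definition monotone_fun :: "nat \<Rightarrow> ((nat \<Rightarrow> bool) \<Rightarrow> real) \<Rightarrow> bool" where
  "monotone_fun n f \<longleftrightarrow>
     (\<forall>x\<in>cube n. \<forall>y\<in>cube n. (\<forall>i<n. x i \<longrightarrow> y i) \<longrightarrow> f x \<le> f y)"

end

theory Submission
  imports Defs
begin

text \<open>Compression in direction \<open>i\<close> puts, on every edge \<open>{x, flip i x}\<close>, the smaller value of
  \<open>f\<close> at the lower and the larger one at the upper endpoint. It keeps the mean and does not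
  decrease \<open>\<Sum>\<^sub>x \<Phi> (T\<^sub>\<epsilon> f x)\<close>: on an edge \<open>T\<^sub>\<epsilon> f\<close> takes the values \<open>(1 - \<epsilon>) p + \<epsilon> q\<close> and
  \<open>(1 - \<epsilon>) q + \<epsilon> p\<close>, where \<open>p, q\<close> are noisy averages of \<open>f\<close> over the other coordinates, and
  compression replaces \<open>p, q\<close> by some \<open>u \<le> min p q\<close> and \<open>p + q - u\<close>. For \<open>\<epsilon> \<le> 1/2\<close> this
  spreads the two values apart keeping their sum, so convexity of \<open>\<Phi>\<close> applies. Hence among the
  Boolean maximizers with the given mean, one of largest total Hamming weight is fixed by every
  compression, i.e. it is an up-set.\<close>

definition flip :: "nat \<Rightarrow> (nat \<Rightarrow> bool) \<Rightarrow> nat \<Rightarrow> bool" where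
  "flip i x = x(i := \<not> x i)"

lemma flip_flip [simp]: "flip i (flip i x) = x"
  by (auto simp: flip_def)

lemma flip_same [simp]: "flip i x i \<longleftrightarrow> \<not> x i"
  by (simp add: flip_def)

lemma flip_other: "j \<noteq> i \<Longrightarrow> flip i x j = x j"
  by (simp add: flip_def)

lemma flip_in_cube: "i < n \<Longrightarrow> x \<in> cube n \<Longrightarrow> flip i x \<in> cube n"
  by (auto simp: cube_def flip_def)

lemma xadd_apply [simp]: "xadd x z i \<longleftrightarrow> x i \<noteq> z i"
  by (simp add: xadd_def)

lemma xadd_in_cube: "x \<in> cube n \<Longrightarrow> z \<in> cube n \<Longrightarrow> xadd x z \<in> cube n"
  by (auto simp: cube_def xadd_def)

lemma xadd_flip: "xadd y (flip i z) = xadd (flip i y) z"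
  by (auto simp: xadd_def flip_def)

lemma flip_xadd: "flip i (xadd y z) = xadd (flip i y) z"
  by (auto simp: xadd_def flip_def fun_eq_iff)

lemma cube_eq_image_Pow: "cube n = (\<lambda>S i. i \<in> S) ` Pow {..<n}"
proof (intro equalityI subsetI)
  fix x assume "x \<in> cube n"
  then have "x = (\<lambda>i. i \<in> {i. i < n \<and> x i})"
    by (auto simp: cube_def fun_eq_iff) (meson leI)
  then show "x \<in> (\<lambda>S i. i \<in> S) ` Pow {..<n}"
    by (rule image_eqI) auto
qed (auto simp: cube_def)

lemma finite_cube [simp]: "finite (cube n)"
  by (simp add: cube_eq_image_Pow)

lemma card_cube: "card (cube n) = 2 ^ n"
proof -
  have "inj_on (\<lambda>S i. i \<in> S) (Pow {..<n})"
    by (auto simp: inj_on_def fun_eq_iff)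
  then show ?thesis
    by (simp add: cube_eq_image_Pow card_image card_Pow)
qed

lemma cube_Suc: "cube (Suc n) = cube n \<union> (\<lambda>z. z(n := True)) ` cube n"
proof (intro equalityI subsetI)
  fix x assume x: "x \<in> cube (Suc n)"
  show "x \<in> cube n \<union> (\<lambda>z. z(n := True)) ` cube n"
  proof (cases "x n")
    case True
    then have "x = (x(n := False))(n := True)" "x(n := False) \<in> cube n"
      using x by (auto simp: cube_def fun_eq_iff)
    then show ?thesis by blast
  next
    case False
    then show ?thesis
      using x by (auto simp: cube_def) (metis le_antisym not_less_eq_eq)
  qed
qed (auto simp: cube_def)

lemma sum_cube_prod:
  fixes h :: "nat \<Rightarrow> bool \<Rightarrow> real"
  shows "(\<Sum>z\<in>cube n. \<Prod>i<n. h i (z i)) = (\<Prod>i<n. h i True + h i False)"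
proof (induction n)
  case 0
  have "cube 0 = {\<lambda>_. False}"
    by (auto simp: cube_def)
  then show ?case by simp
next
  case (Suc n)
  let ?P = "\<lambda>z. \<Prod>i<n. h i (z i)"
  have "inj_on (\<lambda>z. z(n := True)) (cube n)"
    by (auto simp: inj_on_def cube_def fun_eq_iff)
  moreover have "cube n \<inter> (\<lambda>z. z(n := True)) ` cube n = {}"
    by (auto simp: cube_def)
  ultimately have "(\<Sum>z\<in>cube (Suc n). \<Prod>i<Suc n. h i (z i))
      = (\<Sum>z\<in>cube n. \<Prod>i<Suc n. h i (z i)) + (\<Sum>z\<in>cube n. ?P z * h n True)"
    unfolding cube_Suc by (simp add: sum.union_disjoint sum.reindex)
  also have "(\<Sum>z\<in>cube n. \<Prod>i<Suc n. h i (z i)) = (\<Sum>z\<in>cube n. ?P z * h n False)"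
    by (rule sum.cong) (simp_all add: cube_def)
  also have "\<dots> + (\<Sum>z\<in>cube n. ?P z * h n True)
      = (\<Sum>z\<in>cube n. ?P z) * h n False + (\<Sum>z\<in>cube n. ?P z) * h n True"
    by (simp add: sum_distrib_right)
  finally show ?case
    using Suc by (simp add: algebra_simps)
qed

lemma sum_cube_edges:
  assumes "i < n"
  shows "(\<Sum>x\<in>cube n. h x) = (\<Sum>x\<in>{x\<in>cube n. \<not> x i}. h x + h (flip i x))"
proof -
  let ?L = "{x\<in>cube n. \<not> x i}"
  have "cube n = ?L \<union> flip i ` ?L"
    using assms by (auto simp: flip_in_cube intro: image_eqI[where x = "flip i x" for x])
  then have "(\<Sum>x\<in>cube n. h x) = (\<Sum>x\<in>?L \<union> flip i ` ?L. h x)"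
    by (rule arg_cong)
  also have "\<dots> = (\<Sum>x\<in>?L. h x) + (\<Sum>x\<in>?L. h (flip i x))"
    by (subst sum.union_disjoint) (auto simp: sum.reindex inj_on_inverseI[where g = "flip i"])
  finally show ?thesis
    by (simp add: sum.distrib)
qed

lemma sum_bern: "(\<Sum>z\<in>cube n. bern n e z) = 1"
  using sum_cube_prod[where n = n and h = "\<lambda>i b. if b then e else 1 - e"]
  by (simp add: bern_def)

lemma bern_nonneg: "0 \<le> e \<Longrightarrow> e \<le> 1 \<Longrightarrow> 0 \<le> bern n e z"
  unfolding bern_def by (rule prod_nonneg) auto

lemma noise_cong:
  "(\<And>x. x \<in> cube n \<Longrightarrow> f x = g x) \<Longrightarrow> y \<in> cube n \<Longrightarrow> noise n e f y = noise n e g y"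
  unfolding noise_def by (rule sum.cong) (auto simp: xadd_in_cube)

lemma noise_bounds:
  assumes "0 \<le> e" "e \<le> 1" "\<And>x. x \<in> cube n \<Longrightarrow> g x \<in> {0..1}" "y \<in> cube n"
  shows "noise n e g y \<in> {0..1}"
proof -
  have "0 \<le> noise n e g y"
    unfolding noise_def using assms
    by (intro sum_nonneg mult_nonneg_nonneg bern_nonneg) (auto simp: xadd_in_cube)
  moreover have "noise n e g y \<le> (\<Sum>z\<in>cube n. bern n e z)"
    unfolding noise_def using assms
    by (intro sum_mono mult_left_le bern_nonneg) (auto simp: xadd_in_cube)
  ultimately show ?thesis
    by (simp add: sum_bern)
qed

definition bern_rest :: "nat \<Rightarrow> real \<Rightarrow> nat \<Rightarrow> (nat \<Rightarrow> bool) \<Rightarrow> real" where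
  "bern_rest n e i z = (\<Prod>j\<in>{..<n} - {i}. if z j then e else 1 - e)"

definition partial_noise ::
    "nat \<Rightarrow> real \<Rightarrow> nat \<Rightarrow> ((nat \<Rightarrow> bool) \<Rightarrow> real) \<Rightarrow> (nat \<Rightarrow> bool) \<Rightarrow> real" where
  "partial_noise n e i g y = (\<Sum>z\<in>{z\<in>cube n. \<not> z i}. bern_rest n e i z * g (xadd y z))"

lemma bern_rest_nonneg: "0 \<le> e \<Longrightarrow> e \<le> 1 \<Longrightarrow> 0 \<le> bern_rest n e i z"
  unfolding bern_rest_def by (rule prod_nonneg) auto

lemma bern_eq_bern_rest:
  assumes "i < n"
  shows "bern n e z = (if z i then e else 1 - e) * bern_rest n e i z"
  unfolding bern_def bern_rest_def using assms by (intro prod.remove) auto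

lemma bern_rest_flip: "bern_rest n e i (flip i z) = bern_rest n e i z"
  unfolding bern_rest_def by (rule prod.cong) (auto simp: flip_other)

lemma noise_eq_partial_noise:
  assumes "i < n"
  shows "noise n e g y = (1 - e) * partial_noise n e i g y + e * partial_noise n e i g (flip i y)"
proof -
  have "noise n e g y = (\<Sum>z\<in>{z\<in>cube n. \<not> z i}.
      (1 - e) * (bern_rest n e i z * g (xadd y z)) + e * (bern_rest n e i z * g (xadd (flip i y) z)))"
    unfolding noise_def sum_cube_edges[OF assms]
    by (rule sum.cong) (simp_all add: bern_eq_bern_rest[OF assms] bern_rest_flip xadd_flip)
  then show ?thesis
    by (simp add: partial_noise_def sum.distrib sum_distrib_left)
qed

lemma convex_on_add_le_spread:
  fixes f :: "real \<Rightarrow> real"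
  assumes f: "convex_on I f" and ab: "a \<in> I" "b \<in> I"
    and c: "a \<le> c" "c \<le> b" and cd: "c + d = a + b"
  shows "f c + f d \<le> f a + f b"
proof (cases "a = b")
  case True
  then show ?thesis
    using c cd by simp
next
  case False
  then have "a < b"
    using c by linarith
  define t where "t = (c - a) / (b - a)"
  have t: "0 \<le> t" "t \<le> 1"
    using \<open>a < b\<close> c by (auto simp: t_def divide_simps)
  have "t * (b - a) = c - a"
    using \<open>a < b\<close> by (simp add: t_def)
  then have "c = (1 - t) * a + t * b" "d = (1 - (1 - t)) * a + (1 - t) * b"
    using cd by (simp_all add: algebra_simps)
  then have "f c \<le> (1 - t) * f a + t * f b" "f d \<le> (1 - (1 - t)) * f a + (1 - t) * f b"
    using convex_onD[OF f t ab] convex_onD[OF f _ _ ab, of "1 - t"] t by simp_all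
  then show ?thesis
    by (simp add: algebra_simps)
qed

definition compress :: "nat \<Rightarrow> ((nat \<Rightarrow> bool) \<Rightarrow> real) \<Rightarrow> (nat \<Rightarrow> bool) \<Rightarrow> real" where
  "compress i g x = (if x i then max (g x) (g (flip i x)) else min (g x) (g (flip i x)))"

lemma compress_add_flip: "compress i g x + compress i g (flip i x) = g x + g (flip i x)"
  by (auto simp: compress_def)

lemma sum_compress:
  assumes "i < n"
  shows "(\<Sum>x\<in>cube n. compress i g x) = (\<Sum>x\<in>cube n. g x)"
  by (simp add: sum_cube_edges[OF assms] compress_add_flip)

lemma partial_noise_compress_le:
  assumes "\<not> y i" "0 \<le> e" "e \<le> 1"
  shows "partial_noise n e i (compress i g) y \<le> partial_noise n e i g y"
    and "partial_noise n e i (compress i g) y \<le> partial_noise n e i g (flip i y)"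
  unfolding partial_noise_def using assms
  by (auto simp: compress_def flip_xadd intro!: sum_mono mult_left_mono bern_rest_nonneg)

lemma partial_noise_compress_add:
  "partial_noise n e i (compress i g) y + partial_noise n e i (compress i g) (flip i y)
    = partial_noise n e i g y + partial_noise n e i g (flip i y)"
  unfolding partial_noise_def
  by (simp add: sum.distrib[symmetric] distrib_left[symmetric] flip_xadd[symmetric]
      compress_add_flip)

lemma convex_noise_edge_le_compress:
  fixes \<Phi> :: "real \<Rightarrow> real"
  assumes i: "i < n" and \<Phi>: "convex_on {0..1} \<Phi>" and e: "0 \<le> e" "e \<le> 1/2"
    and g: "\<And>x. x \<in> cube n \<Longrightarrow> g x \<in> {0..1}" and x: "x \<in> cube n" "\<not> x i"
  shows "\<Phi> (noise n e g x) + \<Phi> (noise n e g (flip i x))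
    \<le> \<Phi> (noise n e (compress i g) x) + \<Phi> (noise n e (compress i g) (flip i x))"
proof -
  define p q u v where
    "p = partial_noise n e i g x" "q = partial_noise n e i g (flip i x)"
    "u = partial_noise n e i (compress i g) x" "v = partial_noise n e i (compress i g) (flip i x)"
  have noise: "noise n e g x = (1 - e) * p + e * q" "noise n e g (flip i x) = (1 - e) * q + e * p"
    "noise n e (compress i g) x = (1 - e) * u + e * v"
    "noise n e (compress i g) (flip i x) = (1 - e) * v + e * u"
    unfolding p_q_u_v_def using noise_eq_partial_noise[OF i] by (metis flip_flip)+
  have "compress i g y \<in> {0..1}" if "y \<in> cube n" for y
    using that g[of y] g[of "flip i y"] flip_in_cube[OF i that] by (auto simp: compress_def)
  then have "noise n e (compress i g) y \<in> {0..1}" if "y \<in> cube n" for y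
    using noise_bounds[OF e(1) _ _ that] e(2) by simp
  then have range: "(1 - e) * u + e * v \<in> {0..1}" "(1 - e) * v + e * u \<in> {0..1}"
    using x(1) flip_in_cube[OF i x(1)] noise by metis+
  have "u \<le> p" "u \<le> q" and v: "v = p + q - u"
    using partial_noise_compress_le[where y = x and i = i, OF x(2) e(1)]
      partial_noise_compress_add[of n e i g x] e(2)
    unfolding p_q_u_v_def by simp_all
  then have "0 \<le> (1 - 2 * e) * (p - u)" "0 \<le> (1 - 2 * e) * (q - u)"
    using e(2) by simp_all
  then have "(1 - e) * u + e * v \<le> (1 - e) * p + e * q" "(1 - e) * p + e * q \<le> (1 - e) * v + e * u"
    unfolding v by (simp_all add: algebra_simps)
  then show ?thesis
    unfolding noise by (rule convex_on_add_le_spread[OF \<Phi> range]) (simp add: v algebra_simps)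
qed

lemma sum_convex_noise_le_compress:
  fixes \<Phi> :: "real \<Rightarrow> real"
  assumes i: "i < n" and \<Phi>: "convex_on {0..1} \<Phi>" and e: "0 \<le> e" "e \<le> 1/2"
    and g: "\<And>x. x \<in> cube n \<Longrightarrow> g x \<in> {0..1}"
  shows "(\<Sum>x\<in>cube n. \<Phi> (noise n e g x)) \<le> (\<Sum>x\<in>cube n. \<Phi> (noise n e (compress i g) x))"
  unfolding sum_cube_edges[OF i]
  by (rule sum_mono) (use convex_noise_edge_le_compress[OF i \<Phi> e g] in auto)

definition compress_set :: "nat \<Rightarrow> nat \<Rightarrow> (nat \<Rightarrow> bool) set \<Rightarrow> (nat \<Rightarrow> bool) set" where
  "compress_set n i S =
    {x\<in>cube n. if x i then x \<in> S \<or> flip i x \<in> S else x \<in> S \<and> flip i x \<in> S}"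

lemma indicator_compress_set:
  "i < n \<Longrightarrow> x \<in> cube n \<Longrightarrow>
    indicator (compress_set n i S) x = compress i (indicator S :: _ \<Rightarrow> real) x"
  by (auto simp: indicator_def compress_set_def compress_def flip_in_cube)

lemma sum_indicator_eq_card_subset:
  "finite A \<Longrightarrow> B \<subseteq> A \<Longrightarrow> (\<Sum>x\<in>A. indicator B x) = (of_nat (card B) :: 'a::semiring_1)"
  by (simp add: indicator_def Int_absorb1 Int_commute)

lemma card_compress_set:
  assumes "i < n" "S \<subseteq> cube n"
  shows "card (compress_set n i S) = card S"
proof -
  have "compress_set n i S \<subseteq> cube n"
    by (auto simp: compress_set_def)
  then have "real (card (compress_set n i S)) = (\<Sum>x\<in>cube n. indicator (compress_set n i S) x)"
    by (simp add: sum_indicator_eq_card_subset)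
  also have "\<dots> = (\<Sum>x\<in>cube n. compress i (indicator S) x)"
    using assms(1) by (simp add: indicator_compress_set)
  also have "\<dots> = real (card S)"
    using assms by (simp add: sum_compress sum_indicator_eq_card_subset)
  finally show ?thesis
    by simp
qed

definition hamming_weight :: "nat \<Rightarrow> (nat \<Rightarrow> bool) \<Rightarrow> nat" where
  "hamming_weight n x = card {j. j < n \<and> x j}"

definition total_weight :: "nat \<Rightarrow> (nat \<Rightarrow> bool) set \<Rightarrow> real" where
  "total_weight n S = (\<Sum>x\<in>cube n. indicator S x * real (hamming_weight n x))"

lemma hamming_weight_flip:
  assumes "i < n" "\<not> x i"
  shows "hamming_weight n (flip i x) = Suc (hamming_weight n x)"
proof -
  have "{j. j < n \<and> flip i x j} = insert i {j. j < n \<and> x j}"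
    using assms by (auto simp: flip_def)
  then show ?thesis
    using assms(2) by (simp add: hamming_weight_def)
qed

lemma total_weight_compress_set_less:
  assumes i: "i < n" and w: "w \<in> cube n" "\<not> w i" "w \<in> S" "flip i w \<notin> S"
  shows "total_weight n S < total_weight n (compress_set n i S)"
proof -
  let ?E = "\<lambda>T x. indicator T x * real (hamming_weight n x)
    + indicator T (flip i x) * real (hamming_weight n (flip i x))"
  have edge: "?E S x \<le> ?E (compress_set n i S) x"
    and edge_less: "x \<in> S \<Longrightarrow> flip i x \<notin> S \<Longrightarrow> ?E S x < ?E (compress_set n i S) x"
    if "x \<in> cube n" "\<not> x i" for x
    using that flip_in_cube[OF i that(1)] hamming_weight_flip[where x = x, OF i that(2)]
    by (auto simp: indicator_def compress_set_def)
  show ?thesis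
    unfolding total_weight_def sum_cube_edges[OF i]
    by (rule sum_strict_mono_ex1) (use edge edge_less w in auto)
qed

lemma monotone_fun_indicator:
  assumes up: "\<And>w i. w \<in> cube n \<Longrightarrow> i < n \<Longrightarrow> \<not> w i \<Longrightarrow> w \<in> S \<Longrightarrow> flip i w \<in> S"
  shows "monotone_fun n (indicator S)"
proof -
  have "y \<in> S" if "x \<in> cube n" "y \<in> cube n" "\<forall>j<n. x j \<longrightarrow> y j" "x \<in> S" for x y
    using that
  proof (induction "card {j. j < n \<and> y j \<and> \<not> x j}" arbitrary: x)
    case 0
    then have "x = y"
      by (auto simp: cube_def fun_eq_iff) (metis not_le)
    with 0 show ?case
      by simp
  next
    case (Suc d)
    then obtain i where i: "i < n" "y i" "\<not> x i"
      by (metis (no_types, lifting) Collect_empty_eq card.empty nat.distinct(1))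
    have "{j. j < n \<and> y j \<and> \<not> flip i x j} = {j. j < n \<and> y j \<and> \<not> x j} - {i}"
      using i by (auto simp: flip_def)
    then have "d = card {j. j < n \<and> y j \<and> \<not> flip i x j}"
      using Suc.hyps(2) i by simp
    moreover have "\<forall>j<n. flip i x j \<longrightarrow> y j"
      using Suc.prems(3) i by (auto simp: flip_def)
    ultimately show ?case
      using Suc flip_in_cube[OF i(1)] up i by blast
  qed
  then show ?thesis
    by (auto simp: monotone_fun_def indicator_def)
qed

lemma ex_flip_closed_maximizer:
  fixes J :: "(nat \<Rightarrow> bool) set \<Rightarrow> real"
  assumes "finite W" "W \<noteq> {}"
    and compress: "\<And>S i. S \<in> W \<Longrightarrow> i < n \<Longrightarrow> compress_set n i S \<in> W \<and> J S \<le> J (compress_set n i S)"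
  shows "\<exists>S\<in>W. (\<forall>T\<in>W. J T \<le> J S) \<and>
    (\<forall>w\<in>cube n. \<forall>i<n. \<not> w i \<longrightarrow> w \<in> S \<longrightarrow> flip i w \<in> S)"
proof -
  obtain S0 where S0: "S0 \<in> W" "\<forall>T\<in>W. J T \<le> J S0"
    using ex_is_arg_min_if_finite[OF assms(1,2), of "\<lambda>T. - J T"]
    by (auto simp: is_arg_min_def not_less)
  define M where "M = {T\<in>W. J T = J S0}"
  have "finite M" "M \<noteq> {}"
    using assms(1) S0 by (auto simp: M_def)
  then obtain S where S: "S \<in> M" "\<forall>T\<in>M. total_weight n T \<le> total_weight n S"
    using ex_is_arg_min_if_finite[of M "\<lambda>T. - total_weight n T"]
    by (auto simp: is_arg_min_def not_less)
  have closed: "flip i w \<in> S" if "w \<in> cube n" "i < n" "\<not> w i" "w \<in> S" for w i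
  proof (rule ccontr)
    assume "flip i w \<notin> S"
    then have "total_weight n S < total_weight n (compress_set n i S)"
      using total_weight_compress_set_less that by blast
    moreover have "compress_set n i S \<in> M"
      using compress[of S i] S0 S(1) that(2) by (force simp: M_def)
    ultimately show False
      using S(2) by fastforce
  qed
  show ?thesis
    using S S0 closed by (intro bexI[of _ S]) (auto simp: M_def)
qed

lemma cexp_cong: "(\<And>x. x \<in> cube n \<Longrightarrow> f x = g x) \<Longrightarrow> cexp n f = cexp n g"
  unfolding cexp_def by (simp cong: sum.cong)

lemma cexp_indicator: "S \<subseteq> cube n \<Longrightarrow> cexp n (indicator S) = real (card S) / 2 ^ n"
  by (simp add: cexp_def sum_indicator_eq_card_subset)

lemma boolean_fun_eq_indicator:
  "boolean_fun n g \<Longrightarrow> x \<in> cube n \<Longrightarrow> g x = indicator {x\<in>cube n. g x = 1} x"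
  by (auto simp: boolean_fun_def indicator_def)

lemma sum_convex_noise_le_compress_set:
  fixes \<Phi> :: "real \<Rightarrow> real"
  assumes i: "i < n" and \<Phi>: "convex_on {0..1} \<Phi>" and e: "0 \<le> e" "e \<le> 1/2"
  shows "(\<Sum>x\<in>cube n. \<Phi> (noise n e (indicator S) x))
    \<le> (\<Sum>x\<in>cube n. \<Phi> (noise n e (indicator (compress_set n i S)) x))"
proof -
  have "(\<Sum>x\<in>cube n. \<Phi> (noise n e (indicator S) x))
      \<le> (\<Sum>x\<in>cube n. \<Phi> (noise n e (compress i (indicator S)) x))"
    using sum_convex_noise_le_compress[OF i \<Phi> e] by (simp add: indicator_def)
  also have "\<dots> = (\<Sum>x\<in>cube n. \<Phi> (noise n e (indicator (compress_set n i S)) x))"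
    using i by (intro sum.cong refl arg_cong[where f = \<Phi>] noise_cong)
      (simp_all add: indicator_compress_set)
  finally show ?thesis .
qed

lemma ex_monotone_maximizer:
  fixes \<Phi> :: "real \<Rightarrow> real"
  assumes j: "j \<le> 2 ^ n" and \<Phi>: "convex_on {0..1} \<Phi>" and e: "0 \<le> e" "e \<le> 1/2"
  shows "\<exists>S\<subseteq>cube n. card S = j \<and> monotone_fun n (indicator S) \<and>
    (\<forall>T\<subseteq>cube n. card T = j \<longrightarrow>
      (\<Sum>x\<in>cube n. \<Phi> (noise n e (indicator T) x)) \<le> (\<Sum>x\<in>cube n. \<Phi> (noise n e (indicator S) x)))"
proof -
  define W where "W = {S. S \<subseteq> cube n \<and> card S = j}"
  have "finite W"
    by (rule finite_subset[of _ "Pow (cube n)"]) (auto simp: W_def)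
  moreover have "W \<noteq> {}"
    using obtain_subset_with_card_n[of j "cube n"] j by (auto simp: W_def card_cube)
  moreover have "compress_set n i S \<in> W" if "S \<in> W" "i < n" for S i
    using that card_compress_set by (auto simp: W_def compress_set_def)
  ultimately have "\<exists>S\<in>W. (\<forall>T\<in>W. (\<Sum>x\<in>cube n. \<Phi> (noise n e (indicator T) x))
      \<le> (\<Sum>x\<in>cube n. \<Phi> (noise n e (indicator S) x))) \<and>
    (\<forall>w\<in>cube n. \<forall>i<n. \<not> w i \<longrightarrow> w \<in> S \<longrightarrow> flip i w \<in> S)"
    using sum_convex_noise_le_compress_set[OF _ \<Phi> e] by (intro ex_flip_closed_maximizer) auto
  then obtain S where "S \<in> W"
    and "\<forall>T\<in>W. (\<Sum>x\<in>cube n. \<Phi> (noise n e (indicator T) x))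
      \<le> (\<Sum>x\<in>cube n. \<Phi> (noise n e (indicator S) x))"
    and up: "\<forall>w\<in>cube n. \<forall>i<n. \<not> w i \<longrightarrow> w \<in> S \<longrightarrow> flip i w \<in> S"
    by blast
  moreover have "monotone_fun n (indicator S)"
    using up by (intro monotone_fun_indicator) blast
  ultimately show ?thesis
    unfolding W_def by blast
qed

theorem theorem2:
  fixes n :: nat and eps m :: real and \<Phi> :: "real \<Rightarrow> real"
  assumes "n \<ge> 1"
    and "0 \<le> eps" and "eps \<le> 1/2"
    and "\<exists>j::nat. j \<le> 2 ^ n \<and> m = real j / 2 ^ n"
    and "convex_on {0..1} \<Phi>"
  shows "\<exists>f. boolean_fun n f \<and> monotone_fun n f \<and> cexp n f = m \<and>
           (\<forall>g. boolean_fun n g \<and> cexp n g = m \<longrightarrow>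
              cexp n (\<lambda>x. \<Phi> (noise n eps f x)) \<ge> cexp n (\<lambda>x. \<Phi> (noise n eps g x)))"
proof -
  obtain j :: nat where j: "j \<le> 2 ^ n" "m = real j / 2 ^ n"
    using assms(4) by blast
  obtain S where S: "S \<subseteq> cube n" "card S = j" "monotone_fun n (indicator S)"
    and max: "\<forall>T\<subseteq>cube n. card T = j \<longrightarrow>
      (\<Sum>x\<in>cube n. \<Phi> (noise n eps (indicator T) x)) \<le> (\<Sum>x\<in>cube n. \<Phi> (noise n eps (indicator S) x))"
    using ex_monotone_maximizer[OF j(1) assms(5,2,3)] by blast
  show ?thesis
  proof (intro exI conjI allI impI)
    show "boolean_fun n (indicator S)" "monotone_fun n (indicator S)" "cexp n (indicator S) = m"
      using S j(2) by (simp_all add: boolean_fun_def indicator_def cexp_indicator)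
    fix g assume g: "boolean_fun n g \<and> cexp n g = m"
    let ?T = "{x\<in>cube n. g x = 1}"
    have gT: "\<And>x. x \<in> cube n \<Longrightarrow> g x = indicator ?T x"
      using g boolean_fun_eq_indicator[of n g] by blast
    have "cexp n (indicator ?T) = cexp n g"
      by (rule cexp_cong) (rule gT[symmetric])
    then have "card ?T = j"
      using g j(2) cexp_indicator[of ?T n] by simp
    then have "(\<Sum>x\<in>cube n. \<Phi> (noise n eps (indicator ?T) x))
        \<le> (\<Sum>x\<in>cube n. \<Phi> (noise n eps (indicator S) x))"
      using max by (simp add: subset_eq)
    moreover have "cexp n (\<lambda>x. \<Phi> (noise n eps g x)) = cexp n (\<lambda>x. \<Phi> (noise n eps (indicator ?T) x))"
      by (intro cexp_cong arg_cong[where f = \<Phi>] noise_cong; (rule gT)?; assumption)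
    ultimately show "cexp n (\<lambda>x. \<Phi> (noise n eps (indicator S) x)) \<ge> cexp n (\<lambda>x. \<Phi> (noise n eps g x))"
      by (simp add: cexp_def divide_right_mono)
  qed
qed

end
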